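(* Let $\mu$ be a classification problem with Bayes regressor $f^*$, and let $\mathrm{Err}^*:=\frac12\min_{q\in\mathcal Q_k}\sum_{a\in[m]}W_1(r^*_a,q)$ with $r^*_a:=f^*\sharp(\mu^X_a\times\{a\})$. Let $\tilde f:\mathcal X\times\mathcal A\to\Delta_k$ be any deterministic measurable predictor, $\tilde r_a:=\tilde f\sharp(\mu^X_a\times\{a\})$, let $\tilde q\in\arg\min_{q\in\mathcal Q_k}\sum_{a}W_1(\tilde r_a,q)$, and for each $a$ let $T_a:\Delta_k\to\mathcal Y$ be the randomized function induced by an optimal coupling $\tilde\gamma_a\in\Gamma(\tilde r_a,\tilde q)$ for the cost $\|s-y\|_1$ (Markov kernel $K_a(s,B)=\tilde\gamma_a(B\mid s)$). Let $\bar h(x,a)=T_a(\tilde f(x,a))$. Then $$0\le\sum_{a\in[m]}\mathrm{Err}_a(\bar h)-\mathrm{Err}^*\le\sum_{a\in[m]}\mathbb E_{X\sim\mu^X_a}\big[\|\tilde f(X,a)-f^*(X,a)\|_1\big].$$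
   Context: Setup. $\mathcal X$ is a standard Borel space, $k\ge 2$, $\mathcal Y=\{e_1,\dots,e_k\}\subset\mathbb R^k$ is the set of standard basis vectors (one-hot labels), and $\mathcal A=[m]=\{1,\dots,m\}$. A classification problem is a probability distribution $\mu$ of a triple $(X,Y,A)$ on $\mathcal X\times\mathcal Y\times\mathcal A$ with $\mathbb P(A=a)>0$ for every $a$; $\mu_a$ is $\mu$ conditioned on $A=a$ and $\mu^X_a$ is the law of $X$ under $\mu_a$. A randomized function is given by a Markov kernel $K$ with $\mathbb P(f(u)\in B)=K(u,B)$, its randomness independent of $(X,Y,A)$. For a classifier $h:\mathcal X\times\mathcal A\to\mathcal Y$, $\mathrm{Err}_a(h):=\mathbb P(h(X,a)\neq Y\mid A=a)$. $\Delta_k=\{x\in\mathbb R^k:x\ge0,\ \sum_i x_i=1\}$. The Bayes regressor is $f^*(x,a)=\mathbb E_\mu[Y\mid X=x,A=a]\in\Delta_k$; $g\sharp(\mu^X_a\times\{a\})$ is the law of $g(X,a)$ for $X\sim\mu^X_a$. $\mathcal Q_k$ is the set of probability distributions supported on $\mathcal Y$. $\Gamma(p,q)$ is the set of couplings of $p$ and $q$, and $W_1(p,q)=\inf_{\gamma\in\Gamma(p,q)}\int\|s-s'\|_1\,d\gamma(s,s')$. *)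

theory Defs
  imports "HOL-Probability.Probability"
begin

text \<open>Labels: the label e_i in R^k is represented by its index i :: 'k (a finite type,
  k = CARD('k)); the vector itself is e i below.  Groups: a finite type 'g (m = CARD('g)).\<close>

definition e :: "'k::finite \<Rightarrow> real^'k" where
  "e i = axis i 1"

definition Delta :: "(real^'k::finite) set" where
  "Delta = {s. (\<forall>i. 0 \<le> s $ i) \<and> (\<Sum>i\<in>UNIV. s $ i) = 1}"

definition l1dist :: "real^'k::finite \<Rightarrow> real^'k \<Rightarrow> real" where
  "l1dist s t = (\<Sum>i\<in>UNIV. \<bar>s $ i - t $ i\<bar>)"

definition classification_problem ::
  "('x::polish_space \<times> 'k::finite \<times> 'g::finite) measure \<Rightarrow> bool" where
  "classification_problem \<mu> \<longleftrightarrow> prob_space \<mu> \<and>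
     sets \<mu> = sets (borel \<Otimes>\<^sub>M count_space UNIV \<Otimes>\<^sub>M count_space UNIV) \<and>
     (\<forall>a. measure \<mu> {z. snd (snd z) = a} > 0)"

definition probA :: "('x \<times> 'k \<times> 'g) measure \<Rightarrow> 'g \<Rightarrow> real" where
  "probA \<mu> a = measure \<mu> {z. snd (snd z) = a}"

definition muX :: "('x::topological_space \<times> 'k \<times> 'g) measure \<Rightarrow> 'g \<Rightarrow> 'x measure" where
  "muX \<mu> a = distr (density \<mu> (\<lambda>z. ennreal (indicator {z. snd (snd z) = a} z / probA \<mu> a)))
                   borel fst"

text \<open>Bayes regressor f*(x,a) = E[Y | X = x, A = a] (a version with values in Delta_k):
  its i-th coordinate is a version of the conditional probability P(Y = e_i | X, A).\<close>
definition bayes_regressor ::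
  "('x::polish_space \<times> 'k::finite \<times> 'g::finite) measure \<Rightarrow> ('x \<Rightarrow> 'g \<Rightarrow> real^'k) \<Rightarrow> bool" where
  "bayes_regressor \<mu> f \<longleftrightarrow>
     (\<forall>a. (\<lambda>x. f x a) \<in> borel_measurable borel) \<and> (\<forall>x a. f x a \<in> Delta) \<and>
     (\<forall>S a i. S \<in> sets borel \<longrightarrow>
        measure \<mu> {z. fst z \<in> S \<and> fst (snd z) = i \<and> snd (snd z) = a} =
        (\<integral>z. indicator {z. fst z \<in> S \<and> snd (snd z) = a} z * (f (fst z) a) $ i \<partial>\<mu>))"

definition pushf :: "('x::polish_space \<times> 'k::finite \<times> 'g) measure \<Rightarrow> ('x \<Rightarrow> 'g \<Rightarrow> real^'k) \<Rightarrow> 'g \<Rightarrow> (real^'k) measure" where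
  "pushf \<mu> g a = distr (muX \<mu> a) borel (\<lambda>x. g x a)"

definition Qk :: "(real^'k::finite) measure set" where
  "Qk = {q. prob_space q \<and> sets q = sets borel \<and> measure q (range e) = 1}"

definition couplings :: "(real^'k::finite) measure \<Rightarrow> (real^'k) measure \<Rightarrow> ((real^'k) \<times> (real^'k)) measure set" where
  "couplings p q = {\<gamma>. prob_space \<gamma> \<and> sets \<gamma> = sets (borel \<Otimes>\<^sub>M borel) \<and>
                        distr \<gamma> borel fst = p \<and> distr \<gamma> borel snd = q}"

definition transport_cost :: "((real^'k::finite) \<times> (real^'k)) measure \<Rightarrow> ennreal" where
  "transport_cost \<gamma> = (\<integral>\<^sup>+ z. ennreal (l1dist (fst z) (snd z)) \<partial>\<gamma>)"

definition W1 :: "(real^'k::finite) measure \<Rightarrow> (real^'k) measure \<Rightarrow> real" where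
  "W1 p q = enn2real (INF \<gamma>\<in>couplings p q. transport_cost \<gamma>)"

definition optimal_coupling :: "(real^'k::finite) measure \<Rightarrow> (real^'k) measure \<Rightarrow> ((real^'k) \<times> (real^'k)) measure \<Rightarrow> bool" where
  "optimal_coupling p q \<gamma> \<longleftrightarrow> \<gamma> \<in> couplings p q \<and>
     transport_cost \<gamma> = (INF \<gamma>'\<in>couplings p q. transport_cost \<gamma>')"

text \<open>A Markov kernel from Delta_k (inside R^k) to Y, given by K s j = K(s, {e_j}).\<close>
definition markov_kernel_Y :: "(real^'k::finite \<Rightarrow> 'k \<Rightarrow> real) \<Rightarrow> bool" where
  "markov_kernel_Y K \<longleftrightarrow> (\<forall>j. (\<lambda>s. K s j) \<in> borel_measurable borel) \<and>
     (\<forall>s j. 0 \<le> K s j) \<and> (\<forall>s. (\<Sum>j\<in>UNIV. K s j) = 1)"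

definition disintegrates :: "((real^'k::finite) \<times> (real^'k)) measure \<Rightarrow> (real^'k \<Rightarrow> 'k \<Rightarrow> real) \<Rightarrow> bool" where
  "disintegrates \<gamma> K \<longleftrightarrow> markov_kernel_Y K \<and>
     (\<forall>S j. S \<in> sets borel \<longrightarrow>
        measure \<gamma> (S \<times> {e j}) = (\<integral>s. indicator S s * K s j \<partial>(distr \<gamma> borel fst)))"

text \<open>Err_a(h) = P(h(X,a) \<noteq> Y | A = a) for a randomized classifier h given by the kernel
  H x a j = P(h(x,a) = e_j), with randomness independent of (X,Y,A).\<close>
definition Err :: "('x \<times> 'k \<times> 'g) measure \<Rightarrow> ('x \<Rightarrow> 'g \<Rightarrow> 'k \<Rightarrow> real) \<Rightarrow> 'g \<Rightarrow> real" where
  "Err \<mu> H a = (\<integral>z. indicator {z. snd (snd z) = a} z * (1 - H (fst z) a (fst (snd z))) \<partial>\<mu>) / probA \<mu> a"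

end

theory Submission
  imports Defs
begin

text \<open>
  If a label kernel T is applied to a score s \<in> Delta, the probability that T(s) misses a label drawn
  with law s is half the expected l1 distance from s to T(s). Write r*_a and r~_a for the laws of
  fstar(X) and ftil(X) given A = a. Then 2 Err_a of the post-processed classifier is the cost of the
  plan sending fstar(X) to T_a(ftil(X)); as this plan couples r*_a with qt, summing over a gives
  2 \<Sigma> Err_a \<ge> \<Sigma> W1(r*_a, qt) \<ge> 2 Err*. Replacing fstar by ftil in the same plan changes its cost by
  at most E |ftil - fstar|_1 and yields the optimal plan for r~_a, so 2 \<Sigma> Err_a is at most
  \<Sigma> W1(r~_a, qt) + \<Sigma> E |ftil - fstar|_1, and qt may be replaced by any q \<in> Qk. Finally, transporting
  a coupling of r*_a and q along the label kernel it induces shows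
  W1(r~_a, q) \<le> W1(r*_a, q) + E |ftil - fstar|_1.
\<close>

section \<open>Labels, the simplex and the l1 distance\<close>

lemma e_nth: "e i $ j = (if j = i then 1 else 0)"
  by (simp add: e_def axis_def)

lemma e_eq_iff [simp]: "e i = e j \<longleftrightarrow> i = j"
  by (metis e_nth vec_eq_iff zero_neq_one)

lemma image_e_in_borel: "e ` J \<in> sets borel"
  by (intro borel_closed finite_imp_closed finite_imageI) simp

lemma Delta_nonneg: "s \<in> Delta \<Longrightarrow> 0 \<le> s $ i"
  by (simp add: Delta_def)

lemma Delta_sum: "s \<in> Delta \<Longrightarrow> (\<Sum>i\<in>UNIV. s $ i) = 1"
  by (simp add: Delta_def)

lemma Delta_le_1: "s \<in> Delta \<Longrightarrow> s $ i \<le> 1"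
  using member_le_sum[of i UNIV "\<lambda>i. s $ i"] by (simp add: Delta_def)

lemma markov_kernel_YD:
  assumes "markov_kernel_Y K"
  shows "(\<lambda>s. K s j) \<in> borel_measurable borel" "0 \<le> K s j" "(\<Sum>j\<in>UNIV. K s j) = 1"
  using assms by (simp_all add: markov_kernel_Y_def)

lemma markov_kernel_Y_le_1: "markov_kernel_Y K \<Longrightarrow> K s j \<le> 1"
  using member_le_sum[of j UNIV "K s"] by (simp add: markov_kernel_Y_def)

lemma l1dist_nonneg: "0 \<le> l1dist s t"
  by (simp add: l1dist_def sum_nonneg)

lemma l1dist_commute: "l1dist s t = l1dist t s"
  by (simp add: l1dist_def abs_minus_commute)

lemma l1dist_triangle: "l1dist s u \<le> l1dist s t + l1dist t u"
  unfolding l1dist_def sum.distrib[symmetric] by (rule sum_mono) linarith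

lemma l1dist_e:
  assumes "s \<in> Delta"
  shows "l1dist s (e j) = 2 * (1 - s $ j)"
proof -
  have "l1dist s (e j) = (1 - s $ j) + (\<Sum>i\<in>UNIV - {j}. s $ i)"
    using assms by (simp add: l1dist_def e_nth sum.remove[of _ j] Delta_nonneg Delta_le_1)
  also have "(\<Sum>i\<in>UNIV - {j}. s $ i) = 1 - s $ j"
    using Delta_sum[OF assms] sum.remove[of UNIV j "\<lambda>i. s $ i"] by simp
  finally show ?thesis by simp
qed

lemma l1dist_Delta_le_2:
  assumes "s \<in> Delta" "t \<in> Delta"
  shows "l1dist s t \<le> 2"
proof -
  have "l1dist s t \<le> (\<Sum>i\<in>UNIV. s $ i + t $ i)"
    unfolding l1dist_def using assms by (intro sum_mono) (simp add: Delta_nonneg abs_le_iff)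
  also have "\<dots> = 2"
    using assms by (simp add: sum.distrib Delta_sum)
  finally show ?thesis .
qed

lemma borel_measurable_l1dist [measurable]:
  "f \<in> borel_measurable M \<Longrightarrow> g \<in> borel_measurable M \<Longrightarrow> (\<lambda>x. l1dist (f x) (g x)) \<in> borel_measurable M"
  unfolding l1dist_def
  by (intro borel_measurable_sum borel_measurable_abs borel_measurable_diff
      measurable_compose[OF _ borel_measurable_nth])

definition label_dist :: "('k::finite \<Rightarrow> real) \<Rightarrow> real^'k \<Rightarrow> real" where
  "label_dist \<kappa> s = (\<Sum>j\<in>UNIV. \<kappa> j * l1dist s (e j))"

lemma borel_measurable_label_dist [measurable]:
  assumes "\<And>j. (\<lambda>x. \<kappa> x j) \<in> borel_measurable M" "g \<in> borel_measurable M"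
  shows "(\<lambda>x. label_dist (\<kappa> x) (g x)) \<in> borel_measurable M"
  unfolding label_dist_def using assms by measurable

lemma label_dist_nonneg: "(\<And>j. 0 \<le> \<kappa> j) \<Longrightarrow> 0 \<le> label_dist \<kappa> s"
  by (simp add: label_dist_def sum_nonneg l1dist_nonneg)

lemma label_dist_Delta:
  assumes "(\<Sum>j\<in>UNIV. \<kappa> j) = 1" "s \<in> Delta"
  shows "label_dist \<kappa> s = 2 * (\<Sum>i\<in>UNIV. s $ i * (1 - \<kappa> i))"
proof -
  have "label_dist \<kappa> s = 2 * ((\<Sum>j\<in>UNIV. \<kappa> j) - (\<Sum>j\<in>UNIV. \<kappa> j * s $ j))"
    by (simp add: label_dist_def l1dist_e[OF assms(2)] right_diff_distrib sum_subtractf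
        sum_distrib_left mult.left_commute mult.commute[of _ 2])
  also have "\<dots> = 2 * ((\<Sum>i\<in>UNIV. s $ i) - (\<Sum>i\<in>UNIV. s $ i * \<kappa> i))"
    using assms by (simp add: Delta_sum mult.commute)
  finally show ?thesis
    by (simp add: algebra_simps sum_subtractf)
qed

lemma label_dist_le_2:
  assumes "\<And>j. 0 \<le> \<kappa> j" "(\<Sum>j\<in>UNIV. \<kappa> j) = 1" "s \<in> Delta"
  shows "label_dist \<kappa> s \<le> 2"
proof -
  have "label_dist \<kappa> s \<le> (\<Sum>j\<in>UNIV. \<kappa> j * 2)"
    unfolding label_dist_def using assms
    by (intro sum_mono mult_left_mono) (simp_all add: l1dist_e Delta_nonneg)
  also have "\<dots> = 2"
    using assms(2) by (simp add: sum_distrib_right[symmetric])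
  finally show ?thesis .
qed

lemma label_dist_triangle:
  assumes "\<And>j. 0 \<le> \<kappa> j" "(\<Sum>j\<in>UNIV. \<kappa> j) = 1"
  shows "label_dist \<kappa> s \<le> label_dist \<kappa> t + l1dist s t"
proof -
  have "label_dist \<kappa> s \<le> (\<Sum>j\<in>UNIV. \<kappa> j * (l1dist t (e j) + l1dist s t))"
    unfolding label_dist_def using assms(1)
    by (intro sum_mono mult_left_mono) (simp_all add: add.commute l1dist_triangle)
  then show ?thesis
    using assms(2) by (simp add: label_dist_def distrib_left sum.distrib sum_distrib_right[symmetric])
qed

lemma (in finite_measure) integrable_nonneg_bounded:
  fixes f :: "'a \<Rightarrow> real"
  assumes "f \<in> borel_measurable M" "\<And>x. 0 \<le> f x" "\<And>x. f x \<le> B"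
  shows "integrable M f"
  by (rule integrable_const_bound[where B=B]) (use assms in auto)

lemma (in finite_measure) nn_integral_eq_integral_bounded:
  fixes f :: "'a \<Rightarrow> real"
  assumes "f \<in> borel_measurable M" "\<And>x. 0 \<le> f x" "\<And>x. f x \<le> B"
  shows "(\<integral>\<^sup>+x. ennreal (f x) \<partial>M) = ennreal (\<integral>x. f x \<partial>M)"
  by (rule nn_integral_eq_integral[OF integrable_nonneg_bounded[OF assms]]) (simp add: assms)

lemma Qk_AE_range_e:
  assumes "q \<in> Qk"
  shows "AE x in q. x \<in> range e"
  using assms prob_space.AE_in_set_eq_1[of q "range e"] image_e_in_borel[of UNIV]
  by (simp add: Qk_def)

lemma emeasure_Qk:
  assumes q: "q \<in> Qk" and B: "B \<in> sets borel"
  shows "emeasure q B = (\<Sum>j\<in>UNIV. indicator B (e j) * emeasure q {e j})"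
proof -
  have s: "sets q = sets borel"
    using q by (simp add: Qk_def)
  have "emeasure q B = emeasure q (e ` {j. e j \<in> B})"
    by (rule emeasure_eq_AE) (use Qk_AE_range_e[OF q] B in \<open>auto simp: s image_e_in_borel\<close>)
  also have "\<dots> = (\<Sum>j\<in>{j. e j \<in> B}. emeasure q {e j})"
    by (subst emeasure_eq_sum_singleton) (simp_all add: s sum.reindex inj_on_def)
  also have "\<dots> = (\<Sum>j\<in>UNIV. indicator B (e j) * emeasure q {e j})"
    by (simp add: sum.If_cases indicator_def)
  finally show ?thesis .
qed

lemma Qk_sum_emeasure_singleton:
  assumes q: "q \<in> Qk"
  shows "(\<Sum>j\<in>UNIV. emeasure q {e j}) = 1"
proof -
  have "space q = UNIV" "prob_space q" "sets q = sets borel"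
    using q sets_eq_imp_space_eq[of q borel] by (auto simp: Qk_def)
  then show ?thesis
    using emeasure_Qk[OF q, of UNIV] prob_space.emeasure_space_1 by fastforce
qed

section \<open>Couplings generated by label kernels\<close>

text \<open>The law of (g X, e J) where X has law \<nu> and, given X, the label J has law \<kappa> X.\<close>
definition kernel_coupling ::
  "'x measure \<Rightarrow> ('x \<Rightarrow> real^'k::finite) \<Rightarrow> ('x \<Rightarrow> 'k \<Rightarrow> real) \<Rightarrow> ((real^'k) \<times> (real^'k)) measure" where
  "kernel_coupling \<nu> g \<kappa> =
     distr (density (\<nu> \<Otimes>\<^sub>M count_space UNIV) (\<lambda>z. ennreal (\<kappa> (fst z) (snd z))))
       (borel \<Otimes>\<^sub>M borel) (\<lambda>z. (g (fst z), e (snd z)))"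

lemma sets_kernel_coupling [simp]: "sets (kernel_coupling \<nu> g \<kappa>) = sets (borel \<Otimes>\<^sub>M borel)"
  by (simp add: kernel_coupling_def)

lemma measurable_kernel_coupling [simp]:
  "measurable (kernel_coupling \<nu> g \<kappa>) M = measurable (borel \<Otimes>\<^sub>M borel) M"
  by (rule measurable_cong_sets) simp_all

lemma nn_integral_kernel_coupling:
  fixes \<kappa> :: "'x \<Rightarrow> 'k::finite \<Rightarrow> real"
  assumes g: "g \<in> borel_measurable \<nu>" and \<kappa>: "\<And>j. (\<lambda>x. \<kappa> x j) \<in> borel_measurable \<nu>"
    and f: "f \<in> borel_measurable (borel \<Otimes>\<^sub>M borel)"
  shows "(\<integral>\<^sup>+z. f z \<partial>kernel_coupling \<nu> g \<kappa>) = (\<integral>\<^sup>+x. (\<Sum>j\<in>UNIV. ennreal (\<kappa> x j) * f (g x, e j)) \<partial>\<nu>)"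
proof -
  have dens: "(\<lambda>z. ennreal (\<kappa> (fst z) (snd z))) \<in> borel_measurable (\<nu> \<Otimes>\<^sub>M count_space UNIV)"
    by (rule measurable_compose_countable[where f="\<lambda>j z. ennreal (\<kappa> (fst z) j)" and g=snd])
       (use \<kappa> in measurable)
  have emb: "(\<lambda>z. (g (fst z), e (snd z))) \<in> measurable (\<nu> \<Otimes>\<^sub>M count_space UNIV) (borel \<Otimes>\<^sub>M borel)"
    using g by measurable
  have "(\<integral>\<^sup>+z. f z \<partial>kernel_coupling \<nu> g \<kappa>) =
      (\<integral>\<^sup>+z. ennreal (\<kappa> (fst z) (snd z)) * f (g (fst z), e (snd z)) \<partial>(\<nu> \<Otimes>\<^sub>M count_space UNIV))"
    unfolding kernel_coupling_def
    by (subst nn_integral_distr) (simp_all add: emb f nn_integral_density dens measurable_compose[OF emb f])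
  also have "\<dots> = (\<integral>\<^sup>+x. \<integral>\<^sup>+j. ennreal (\<kappa> x j) * f (g x, e j) \<partial>count_space UNIV \<partial>\<nu>)"
    by (subst sigma_finite_measure.nn_integral_fst[symmetric, OF sigma_finite_measure_count_space_finite])
       (auto intro!: borel_measurable_times_ennreal dens measurable_compose[OF emb f])
  finally show ?thesis
    by (simp add: nn_integral_count_space_finite)
qed

lemma kernel_coupling_in_couplings:
  fixes \<kappa> :: "'x \<Rightarrow> 'k::finite \<Rightarrow> real"
  assumes \<nu>: "prob_space \<nu>" and g: "g \<in> borel_measurable \<nu>"
    and \<kappa>: "\<And>j. (\<lambda>x. \<kappa> x j) \<in> borel_measurable \<nu>"
    and \<kappa>_nonneg: "\<And>x j. 0 \<le> \<kappa> x j" and \<kappa>_sum: "\<And>x. (\<Sum>j\<in>UNIV. \<kappa> x j) = 1"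
    and q: "q \<in> Qk" and marginal: "\<And>j. (\<integral>\<^sup>+x. ennreal (\<kappa> x j) \<partial>\<nu>) = emeasure q {e j}"
  shows "kernel_coupling \<nu> g \<kappa> \<in> couplings (distr \<nu> borel g) q"
proof -
  let ?\<gamma> = "kernel_coupling \<nu> g \<kappa>"
  have average: "(\<Sum>j\<in>UNIV. ennreal (\<kappa> x j) * c) = c" for x c
    using sum_ennreal[of UNIV "\<kappa> x"] \<kappa>_nonneg \<kappa>_sum by (simp add: sum_distrib_right[symmetric])
  have integral_fst: "(\<integral>\<^sup>+z. f (fst z) \<partial>?\<gamma>) = (\<integral>\<^sup>+x. f (g x) \<partial>\<nu>)" if "f \<in> borel_measurable borel" for f
    using that by (simp add: nn_integral_kernel_coupling[OF g \<kappa>] average)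
  have "emeasure ?\<gamma> (space ?\<gamma>) = 1"
    using integral_fst[of "\<lambda>_. 1"] prob_space.emeasure_space_1[OF \<nu>] by simp
  then have "prob_space ?\<gamma>"
    by (rule prob_spaceI)
  moreover have "distr ?\<gamma> borel fst = distr \<nu> borel g"
  proof (rule measure_eqI)
    fix A assume "A \<in> sets (distr ?\<gamma> borel fst)"
    then have A: "A \<in> sets borel" by simp
    have "emeasure (distr ?\<gamma> borel fst) A = (\<integral>\<^sup>+s. indicator A s \<partial>distr ?\<gamma> borel fst)"
      using A by simp
    also have "\<dots> = (\<integral>\<^sup>+z. indicator A (fst z) \<partial>?\<gamma>)"
      using A by (intro nn_integral_distr) simp_all
    also have "\<dots> = emeasure (distr \<nu> borel g) A"
      using A g by (simp add: integral_fst nn_integral_distr[symmetric])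
    finally show "emeasure (distr ?\<gamma> borel fst) A = emeasure (distr \<nu> borel g) A" .
  qed simp
  moreover have "distr ?\<gamma> borel snd = q"
  proof (rule measure_eqI)
    fix A assume "A \<in> sets (distr ?\<gamma> borel snd)"
    then have A: "A \<in> sets borel" by simp
    have "emeasure (distr ?\<gamma> borel snd) A = (\<integral>\<^sup>+s. indicator A s \<partial>distr ?\<gamma> borel snd)"
      using A by simp
    also have "\<dots> = (\<integral>\<^sup>+z. indicator A (snd z) \<partial>?\<gamma>)"
      using A by (intro nn_integral_distr) simp_all
    also have "\<dots> = (\<Sum>j\<in>UNIV. indicator A (e j) * \<integral>\<^sup>+x. ennreal (\<kappa> x j) \<partial>\<nu>)"
      using A \<kappa> by (simp add: nn_integral_kernel_coupling[OF g \<kappa>] nn_integral_sum nn_integral_multc mult.commute)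
    also have "\<dots> = emeasure q A"
      using emeasure_Qk[OF q A] by (simp add: marginal)
    finally show "emeasure (distr ?\<gamma> borel snd) A = emeasure q A" .
  qed (use q in \<open>simp add: Qk_def\<close>)
  ultimately show ?thesis
    by (simp add: couplings_def)
qed

lemma transport_cost_kernel_coupling:
  fixes \<kappa> :: "'x \<Rightarrow> 'k::finite \<Rightarrow> real"
  assumes g: "g \<in> borel_measurable \<nu>" and \<kappa>: "\<And>j. (\<lambda>x. \<kappa> x j) \<in> borel_measurable \<nu>"
    and \<kappa>_nonneg: "\<And>x j. 0 \<le> \<kappa> x j"
  shows "transport_cost (kernel_coupling \<nu> g \<kappa>) = (\<integral>\<^sup>+x. ennreal (label_dist (\<kappa> x) (g x)) \<partial>\<nu>)"
  unfolding transport_cost_def using \<kappa>_nonneg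
  by (simp add: nn_integral_kernel_coupling[OF g \<kappa>] label_dist_def sum_ennreal[symmetric]
      ennreal_mult l1dist_nonneg)

lemma INF_transport_cost_le_label_dist:
  fixes \<kappa> :: "'x \<Rightarrow> 'k::finite \<Rightarrow> real"
  assumes \<nu>: "prob_space \<nu>" and g: "g \<in> borel_measurable \<nu>" and g_Delta: "\<And>x. g x \<in> Delta"
    and \<kappa>: "\<And>j. (\<lambda>x. \<kappa> x j) \<in> borel_measurable \<nu>"
    and \<kappa>_nonneg: "\<And>x j. 0 \<le> \<kappa> x j" and \<kappa>_sum: "\<And>x. (\<Sum>j\<in>UNIV. \<kappa> x j) = 1"
    and q: "q \<in> Qk" and marginal: "\<And>j. (\<integral>\<^sup>+x. ennreal (\<kappa> x j) \<partial>\<nu>) = emeasure q {e j}"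
  shows "(INF \<gamma>\<in>couplings (distr \<nu> borel g) q. transport_cost \<gamma>) \<le> ennreal (\<integral>x. label_dist (\<kappa> x) (g x) \<partial>\<nu>)"
proof -
  have "(INF \<gamma>\<in>couplings (distr \<nu> borel g) q. transport_cost \<gamma>) \<le> transport_cost (kernel_coupling \<nu> g \<kappa>)"
    by (rule INF_lower) (rule kernel_coupling_in_couplings[OF assms(1,2,4-)])
  also have "\<dots> = ennreal (\<integral>x. label_dist (\<kappa> x) (g x) \<partial>\<nu>)"
    using \<nu> g \<kappa> \<kappa>_nonneg \<kappa>_sum g_Delta
    by (simp add: transport_cost_kernel_coupling prob_space_def label_dist_nonneg label_dist_le_2
        finite_measure.nn_integral_eq_integral_bounded[where B=2])
  finally show ?thesis .
qed

lemma INF_transport_cost_le_2: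
  assumes \<nu>: "prob_space \<nu>" and g: "g \<in> borel_measurable \<nu>" and g_Delta: "\<And>x. g x \<in> Delta"
    and q: "q \<in> Qk"
  shows "(INF \<gamma>\<in>couplings (distr \<nu> borel g) q. transport_cost \<gamma>) \<le> 2"
proof -
  define \<kappa> where "\<kappa> = (\<lambda>(x::'a) j. measure q {e j})"
  have q_measure: "emeasure q {e j} = ennreal (measure q {e j})" for j
    using q by (simp add: Qk_def prob_space_def finite_measure.emeasure_eq_measure)
  have \<kappa>_sum: "(\<Sum>j\<in>UNIV. \<kappa> x j) = 1" for x
    using Qk_sum_emeasure_singleton[OF q] by (simp add: \<kappa>_def q_measure sum_ennreal)
  have "(INF \<gamma>\<in>couplings (distr \<nu> borel g) q. transport_cost \<gamma>) \<le> transport_cost (kernel_coupling \<nu> g \<kappa>)"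
    using \<nu> by (intro INF_lower kernel_coupling_in_couplings[OF \<nu> g _ _ \<kappa>_sum q])
      (simp_all add: \<kappa>_def q_measure prob_space.emeasure_space_1)
  also have "\<dots> = (\<integral>\<^sup>+x. ennreal (label_dist (\<kappa> x) (g x)) \<partial>\<nu>)"
    using g by (simp add: transport_cost_kernel_coupling \<kappa>_def)
  also have "\<dots> \<le> (\<integral>\<^sup>+x. 2 \<partial>\<nu>)"
    using label_dist_le_2[OF _ \<kappa>_sum g_Delta] by (intro nn_integral_mono) (simp add: \<kappa>_def flip: ennreal_numeral)
  also have "\<dots> = 2"
    using \<nu> by (simp add: prob_space.emeasure_space_1)
  finally show ?thesis .
qed

lemma ennreal_W1_distr:
  assumes "prob_space \<nu>" "g \<in> borel_measurable \<nu>" "\<And>x. g x \<in> Delta" "q \<in> Qk"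
  shows "ennreal (W1 (distr \<nu> borel g) q) = (INF \<gamma>\<in>couplings (distr \<nu> borel g) q. transport_cost \<gamma>)"
proof -
  have "(INF \<gamma>\<in>couplings (distr \<nu> borel g) q. transport_cost \<gamma>) < \<top>"
    using INF_transport_cost_le_2[OF assms] by (rule le_less_trans) simp
  then show ?thesis
    by (simp add: W1_def)
qed

lemma W1_le_label_dist:
  fixes \<kappa> :: "'x \<Rightarrow> 'k::finite \<Rightarrow> real"
  assumes \<nu>: "prob_space \<nu>" and g: "g \<in> borel_measurable \<nu>" and g_Delta: "\<And>x. g x \<in> Delta"
    and \<kappa>: "\<And>j. (\<lambda>x. \<kappa> x j) \<in> borel_measurable \<nu>"
    and \<kappa>_nonneg: "\<And>x j. 0 \<le> \<kappa> x j" and \<kappa>_sum: "\<And>x. (\<Sum>j\<in>UNIV. \<kappa> x j) = 1"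
    and q: "q \<in> Qk" and marginal: "\<And>j. (\<integral>\<^sup>+x. ennreal (\<kappa> x j) \<partial>\<nu>) = emeasure q {e j}"
  shows "W1 (distr \<nu> borel g) q \<le> (\<integral>x. label_dist (\<kappa> x) (g x) \<partial>\<nu>)"
proof -
  have "ennreal (W1 (distr \<nu> borel g) q) \<le> ennreal (\<integral>x. label_dist (\<kappa> x) (g x) \<partial>\<nu>)"
    unfolding ennreal_W1_distr[OF \<nu> g g_Delta q] by (rule INF_transport_cost_le_label_dist[OF assms])
  then show ?thesis
    by (simp add: label_dist_nonneg \<kappa>_nonneg)
qed

lemma integral_label_dist_le_add:
  fixes \<kappa> :: "'x \<Rightarrow> 'k::finite \<Rightarrow> real"
  assumes \<nu>: "prob_space \<nu>"
    and f: "f \<in> borel_measurable \<nu>" and f_Delta: "\<And>x. f x \<in> Delta"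
    and g: "g \<in> borel_measurable \<nu>" and g_Delta: "\<And>x. g x \<in> Delta"
    and \<kappa>: "\<And>j. (\<lambda>x. \<kappa> x j) \<in> borel_measurable \<nu>"
    and \<kappa>_nonneg: "\<And>x j. 0 \<le> \<kappa> x j" and \<kappa>_sum: "\<And>x. (\<Sum>j\<in>UNIV. \<kappa> x j) = 1"
  shows "(\<integral>x. label_dist (\<kappa> x) (g x) \<partial>\<nu>)
    \<le> (\<integral>x. label_dist (\<kappa> x) (f x) \<partial>\<nu>) + (\<integral>x. l1dist (g x) (f x) \<partial>\<nu>)"
proof -
  interpret finite_measure \<nu>
    using \<nu> by (simp add: prob_space_def)
  have int_label_dist: "integrable \<nu> (\<lambda>x. label_dist (\<kappa> x) (h x))"
    if "h \<in> borel_measurable \<nu>" "\<And>x. h x \<in> Delta" for h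
    using that \<kappa> by (intro integrable_nonneg_bounded[where B=2] label_dist_le_2 label_dist_nonneg
        \<kappa>_nonneg \<kappa>_sum borel_measurable_label_dist)
  have int_l1dist: "integrable \<nu> (\<lambda>x. l1dist (g x) (f x))"
    using f g by (intro integrable_nonneg_bounded[where B=2] l1dist_Delta_le_2 l1dist_nonneg f_Delta g_Delta
        borel_measurable_l1dist)
  have "(\<integral>x. label_dist (\<kappa> x) (g x) \<partial>\<nu>) \<le> (\<integral>x. label_dist (\<kappa> x) (f x) + l1dist (g x) (f x) \<partial>\<nu>)"
    using f g f_Delta g_Delta int_l1dist
    by (intro integral_mono int_label_dist Bochner_Integration.integrable_add label_dist_triangle \<kappa>_nonneg \<kappa>_sum)
  also have "\<dots> = (\<integral>x. label_dist (\<kappa> x) (f x) \<partial>\<nu>) + (\<integral>x. l1dist (g x) (f x) \<partial>\<nu>)"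
    using f f_Delta int_l1dist by (intro Bochner_Integration.integral_add int_label_dist)
  finally show ?thesis .
qed

section \<open>Disintegrating couplings onto labels\<close>

lemma couplingsD:
  assumes "\<gamma> \<in> couplings r q"
  shows "prob_space \<gamma>" "sets \<gamma> = sets (borel \<Otimes>\<^sub>M borel)" "distr \<gamma> borel fst = r" "distr \<gamma> borel snd = q"
  using assms by (simp_all add: couplings_def)

lemma space_couplings: "\<gamma> \<in> couplings r q \<Longrightarrow> space \<gamma> = UNIV"
  using sets_eq_imp_space_eq[OF couplingsD(2)] by (simp add: space_pair_measure)

lemma measurable_couplings:
  "\<gamma> \<in> couplings r q \<Longrightarrow> measurable \<gamma> M = measurable (borel \<Otimes>\<^sub>M borel) M"
  by (rule measurable_cong_sets[OF couplingsD(2) refl])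

lemma prob_space_couplings_fst: "\<gamma> \<in> couplings r q \<Longrightarrow> prob_space r"
  using prob_space.prob_space_distr[OF couplingsD(1), of \<gamma> r q fst borel]
  by (simp add: couplingsD(3) measurable_couplings)

lemma emeasure_couplings_fst:
  assumes "\<gamma> \<in> couplings r q" "S \<in> sets borel"
  shows "emeasure r S = emeasure \<gamma> (S \<times> UNIV)"
  using assms emeasure_distr[of fst \<gamma> borel S]
  by (auto simp: couplingsD(3) measurable_couplings space_couplings vimage_fst)

lemma AE_couplings_Qk_snd:
  fixes q :: "(real^'k::finite) measure"
  assumes \<gamma>: "\<gamma> \<in> couplings r q" and q: "q \<in> Qk"
  shows "AE z in \<gamma>. snd z \<in> range e"
proof -
  have "AE t in distr \<gamma> borel snd. t \<in> range (e :: 'k \<Rightarrow> _)"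
    unfolding couplingsD(4)[OF \<gamma>] by (rule Qk_AE_range_e[OF q])
  then show ?thesis
    by (subst (asm) AE_distr_iff) (simp_all add: measurable_couplings[OF \<gamma>] image_e_in_borel)
qed

lemma sum_emeasure_couplings_Qk:
  assumes \<gamma>: "\<gamma> \<in> couplings r q" and q: "q \<in> Qk" and S: "S \<in> sets borel"
  shows "(\<Sum>j\<in>UNIV. emeasure \<gamma> (S \<times> {e j})) = emeasure r S"
proof -
  have "(\<Sum>j\<in>UNIV. emeasure \<gamma> (S \<times> {e j})) = emeasure \<gamma> (\<Union>j. S \<times> {e j})"
    using S by (intro sum_emeasure) (auto simp: couplingsD(2)[OF \<gamma>] disjoint_family_on_def)
  also have "\<dots> = emeasure \<gamma> (S \<times> UNIV)"
    using AE_couplings_Qk_snd[OF \<gamma> q] S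
    by (intro emeasure_eq_AE) (auto simp: couplingsD(2)[OF \<gamma>])
  finally show ?thesis
    using emeasure_couplings_fst[OF \<gamma> S] by simp
qed

definition coupling_slice :: "((real^'k::finite) \<times> (real^'k)) measure \<Rightarrow> 'k \<Rightarrow> (real^'k) measure" where
  "coupling_slice \<gamma> j = distr (density \<gamma> (\<lambda>z. indicator {e j} (snd z))) borel fst"

lemma sets_coupling_slice [simp]: "sets (coupling_slice \<gamma> j) = sets borel"
  by (simp add: coupling_slice_def)

lemma emeasure_coupling_slice:
  assumes \<gamma>: "\<gamma> \<in> couplings r q" and S: "S \<in> sets borel"
  shows "emeasure (coupling_slice \<gamma> j) S = emeasure \<gamma> (S \<times> {e j})"
proof -
  have "fst -` S \<in> sets \<gamma>"
    using measurable_sets[of fst \<gamma> borel S] S by (simp add: measurable_couplings[OF \<gamma>] space_couplings[OF \<gamma>])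
  then have "emeasure (coupling_slice \<gamma> j) S = (\<integral>\<^sup>+z. indicator {e j} (snd z) * indicator (fst -` S) z \<partial>\<gamma>)"
    unfolding coupling_slice_def using S
    by (simp add: emeasure_distr emeasure_density measurable_couplings[OF \<gamma>] space_couplings[OF \<gamma>])
  also have "\<dots> = (\<integral>\<^sup>+z. indicator (S \<times> {e j}) z \<partial>\<gamma>)"
    by (intro nn_integral_cong) (auto simp: indicator_def)
  also have "\<dots> = emeasure \<gamma> (S \<times> {e j})"
    using S by (simp add: couplingsD(2)[OF \<gamma>])
  finally show ?thesis .
qed

lemma disintegrates_iff_emeasure:
  assumes \<gamma>: "\<gamma> \<in> couplings r q" and K: "markov_kernel_Y K"
  shows "disintegrates \<gamma> K \<longleftrightarrow>
    (\<forall>S j. S \<in> sets borel \<longrightarrow> emeasure \<gamma> (S \<times> {e j}) = (\<integral>\<^sup>+s. ennreal (K s j) * indicator S s \<partial>r))"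
proof -
  have fin: "finite_measure \<gamma>" "finite_measure r"
    using couplingsD(1)[OF \<gamma>] prob_space_couplings_fst[OF \<gamma>] by (simp_all add: prob_space_def)
  have "(\<integral>\<^sup>+s. ennreal (K s j) * indicator S s \<partial>r) = ennreal (\<integral>s. indicator S s * K s j \<partial>r)"
    if S: "S \<in> sets borel" for S j
    using S markov_kernel_YD[OF K] markov_kernel_Y_le_1[OF K] couplingsD(3)[OF \<gamma>, symmetric]
    by (subst finite_measure.nn_integral_eq_integral_bounded[OF fin(2), where B=1, symmetric])
      (auto simp: indicator_def intro!: nn_integral_cong)
  moreover have "0 \<le> (\<integral>s. indicator S s * K s j \<partial>r)" for S j
    using markov_kernel_YD(2)[OF K] by (simp add: Bochner_Integration.integral_nonneg)
  ultimately show ?thesis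
    using K by (simp add: disintegrates_def finite_measure.emeasure_eq_measure[OF fin(1)]
        couplingsD(3)[OF \<gamma>])
qed

lemma nn_integral_coupling_slice:
  assumes \<gamma>: "\<gamma> \<in> couplings r q" and h: "h \<in> borel_measurable borel"
  shows "(\<integral>\<^sup>+z. indicator {e j} (snd z) * h (fst z) \<partial>\<gamma>) = (\<integral>\<^sup>+s. h s \<partial>coupling_slice \<gamma> j)"
  unfolding coupling_slice_def using h
  by (simp add: nn_integral_distr nn_integral_density measurable_couplings[OF \<gamma>])

lemma couplings_Qk_slice_densities:
  fixes q :: "(real^'k::finite) measure"
  assumes \<gamma>: "\<gamma> \<in> couplings r q" and q: "q \<in> Qk"
  obtains f where "\<And>j. f j \<in> borel_measurable borel" "\<And>j. density r (f j) = coupling_slice \<gamma> j"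
    "AE s in r. (\<Sum>j\<in>UNIV. f j s) = 1"
proof -
  have sets_r: "sets r = sets borel"
    using couplingsD(3)[OF \<gamma>] by auto
  interpret r: prob_space r
    by (rule prob_space_couplings_fst[OF \<gamma>])
  have "\<exists>f\<in>borel_measurable r. density r f = coupling_slice \<gamma> j" for j
  proof (rule r.Radon_Nikodym)
    show "absolutely_continuous r (coupling_slice \<gamma> j)"
      unfolding absolutely_continuous_def
    proof
      fix S assume "S \<in> null_sets r"
      then have S: "S \<in> sets borel" "emeasure r S = 0"
        by (auto simp: sets_r)
      have "emeasure \<gamma> (S \<times> {e j}) \<le> emeasure \<gamma> (S \<times> UNIV)"
        using S by (intro emeasure_mono) (auto simp: couplingsD(2)[OF \<gamma>])
      then show "S \<in> null_sets (coupling_slice \<gamma> j)"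
        using S emeasure_couplings_fst[OF \<gamma>] by (simp add: null_sets_def emeasure_coupling_slice[OF \<gamma>])
    qed
  qed (simp add: sets_r)
  then obtain f where f: "\<And>j. f j \<in> borel_measurable borel" and density_f: "\<And>j. density r (f j) = coupling_slice \<gamma> j"
    by (metis measurable_cong_sets[OF sets_r refl])
  have "AE s in r. (\<Sum>j\<in>UNIV. f j s) = 1"
  proof (rule r.density_unique2)
    fix S assume "S \<in> sets r"
    then have S: "S \<in> sets borel"
      by (simp add: sets_r)
    have "(\<integral>\<^sup>+s\<in>S. (\<Sum>j\<in>UNIV. f j s) \<partial>r) = (\<Sum>j\<in>UNIV. \<integral>\<^sup>+s\<in>S. f j s \<partial>r)"
      unfolding sum_distrib_right using S f
      by (intro nn_integral_sum) (simp add: measurable_cong_sets[OF sets_r refl])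
    also have "\<dots> = (\<Sum>j\<in>UNIV. emeasure \<gamma> (S \<times> {e j}))"
      using S f by (simp add: emeasure_density[symmetric] density_f emeasure_coupling_slice[OF \<gamma>]
          measurable_cong_sets[OF sets_r refl] sets_r)
    also have "\<dots> = (\<integral>\<^sup>+s\<in>S. 1 \<partial>r)"
      using S by (simp add: sum_emeasure_couplings_Qk[OF \<gamma> q] sets_r)
    finally show "(\<integral>\<^sup>+s\<in>S. (\<Sum>j\<in>UNIV. f j s) \<partial>r) = (\<integral>\<^sup>+s\<in>S. 1 \<partial>r)" .
  qed (use f in \<open>simp_all add: measurable_cong_sets[OF sets_r refl]\<close>)
  then show ?thesis
    using that f density_f by blast
qed

lemma couplings_Qk_disintegrates:
  fixes q :: "(real^'k::finite) measure"
  assumes \<gamma>: "\<gamma> \<in> couplings r q" and q: "q \<in> Qk"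
  obtains K where "disintegrates \<gamma> K"
proof -
  obtain f where f: "\<And>j. f j \<in> borel_measurable borel" and density_f: "\<And>j. density r (f j) = coupling_slice \<gamma> j"
    and sum_f: "AE s in r. (\<Sum>j\<in>UNIV. f j s) = 1"
    using couplings_Qk_slice_densities[OF \<gamma> q] by blast
  \<comment> \<open>Off the full-measure set where the densities sum to one, K is an arbitrary point mass.\<close>
  define K where "K s j = (if (\<Sum>i\<in>UNIV. f i s) = 1 then enn2real (f j s) else if j = undefined then 1 else 0)"
    for s j
  have f_finite: "f j s < \<top>" if "(\<Sum>i\<in>UNIV. f i s) = 1" for s j
    using member_le_sum[of j UNIV "\<lambda>i. f i s"] that by (simp add: top.not_eq_extremum le_less_trans)
  have "markov_kernel_Y K"
  proof -
    have "(\<Sum>j\<in>UNIV. K s j) = 1" for s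
    proof (cases "(\<Sum>i\<in>UNIV. f i s) = 1")
      case True
      then have "(\<Sum>j\<in>UNIV. K s j) = enn2real (\<Sum>j\<in>UNIV. f j s)"
        using enn2real_sum[of UNIV "\<lambda>j. f j s"] f_finite[OF True] by (simp add: K_def comp_def)
      then show ?thesis
        using True by simp
    qed (simp add: K_def)
    moreover have "(\<lambda>s. K s j) \<in> borel_measurable borel" for j
      unfolding K_def using f by measurable
    ultimately show ?thesis
      by (simp add: markov_kernel_Y_def K_def)
  qed
  moreover have "emeasure \<gamma> (S \<times> {e j}) = (\<integral>\<^sup>+s. ennreal (K s j) * indicator S s \<partial>r)"
    if S: "S \<in> sets borel" for S j
  proof -
    have "emeasure \<gamma> (S \<times> {e j}) = (\<integral>\<^sup>+s. f j s * indicator S s \<partial>r)"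
      using S f couplingsD(3)[OF \<gamma>, symmetric]
      by (simp add: emeasure_coupling_slice[OF \<gamma>, symmetric] density_f[symmetric] emeasure_density)
    also have "\<dots> = (\<integral>\<^sup>+s. ennreal (K s j) * indicator S s \<partial>r)"
    proof (rule nn_integral_cong_AE)
      show "AE s in r. f j s * indicator S s = ennreal (K s j) * indicator S s"
        using sum_f by eventually_elim (simp add: K_def f_finite)
    qed
    finally show ?thesis .
  qed
  ultimately show ?thesis
    using that disintegrates_iff_emeasure[OF \<gamma>] by blast
qed

lemma coupling_slice_disintegrates:
  assumes \<gamma>: "\<gamma> \<in> couplings r q" and K: "disintegrates \<gamma> K"
  shows "coupling_slice \<gamma> j = density r (\<lambda>s. ennreal (K s j))"
proof (rule measure_eqI)
  have K_kernel: "markov_kernel_Y K"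
    using K by (simp add: disintegrates_def)
  fix S assume "S \<in> sets (coupling_slice \<gamma> j)"
  then have S: "S \<in> sets borel" by simp
  then show "emeasure (coupling_slice \<gamma> j) S = emeasure (density r (\<lambda>s. ennreal (K s j))) S"
    using K disintegrates_iff_emeasure[OF \<gamma> K_kernel] markov_kernel_YD(1)[OF K_kernel]
    by (simp add: emeasure_coupling_slice[OF \<gamma>] emeasure_density couplingsD(3)[OF \<gamma>, symmetric] mult.commute)
qed (simp add: couplingsD(3)[OF \<gamma>, symmetric])

lemma nn_integral_disintegrates:
  assumes \<gamma>: "\<gamma> \<in> couplings r q" and K: "disintegrates \<gamma> K"
  shows "(\<integral>\<^sup>+s. ennreal (K s j) \<partial>r) = emeasure q {e j}"
proof -
  have K_j: "(\<lambda>s. ennreal (K s j)) \<in> borel_measurable r"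
    using K couplingsD(3)[OF \<gamma>] by (auto simp: disintegrates_def markov_kernel_Y_def)
  have "space r = UNIV"
    using couplingsD(3)[OF \<gamma>] by auto
  then have "(\<integral>\<^sup>+s. ennreal (K s j) \<partial>r) = emeasure (coupling_slice \<gamma> j) UNIV"
    using emeasure_density[OF K_j, of UNIV] sets.top[of r] by (simp add: coupling_slice_disintegrates[OF \<gamma> K])
  also have "\<dots> = emeasure \<gamma> (snd -` {e j} \<inter> space \<gamma>)"
    by (simp add: emeasure_coupling_slice[OF \<gamma>] space_couplings[OF \<gamma>] vimage_snd)
  also have "\<dots> = emeasure q {e j}"
    using couplingsD(4)[OF \<gamma>] by (auto simp: emeasure_distr measurable_couplings[OF \<gamma>])
  finally show ?thesis .
qed

lemma sum_indicator_e: "(\<Sum>j\<in>UNIV. indicator {e j} (e i) * c j) = (c i :: 'a::semiring_1)"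
  by (simp add: indicator_def)

lemma transport_cost_disintegrates:
  fixes q :: "(real^'k::finite) measure"
  assumes \<gamma>: "\<gamma> \<in> couplings r q" and q: "q \<in> Qk" and K: "disintegrates \<gamma> K"
  shows "transport_cost \<gamma> = (\<integral>\<^sup>+s. ennreal (label_dist (K s) s) \<partial>r)"
proof -
  have K_kernel: "markov_kernel_Y K"
    using K by (simp add: disintegrates_def)
  have "transport_cost \<gamma> = (\<integral>\<^sup>+z. (\<Sum>j\<in>UNIV. indicator {e j} (snd z) * ennreal (l1dist (fst z) (e j))) \<partial>\<gamma>)"
    unfolding transport_cost_def
  proof (rule nn_integral_cong_AE)
    show "AE z in \<gamma>. ennreal (l1dist (fst z) (snd z))
        = (\<Sum>j\<in>UNIV. indicator {e j} (snd z) * ennreal (l1dist (fst z) (e j)))"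
      using AE_couplings_Qk_snd[OF \<gamma> q]
    proof eventually_elim
      case (elim z)
      then obtain i where "snd z = e i"
        by blast
      then show ?case
        by (simp only: sum_indicator_e)
    qed
  qed
  also have "\<dots> = (\<Sum>j\<in>UNIV. \<integral>\<^sup>+z. indicator {e j} (snd z) * ennreal (l1dist (fst z) (e j)) \<partial>\<gamma>)"
    by (rule nn_integral_sum) (simp add: measurable_couplings[OF \<gamma>])
  also have "\<dots> = (\<Sum>j\<in>UNIV. \<integral>\<^sup>+s. ennreal (l1dist s (e j)) \<partial>coupling_slice \<gamma> j)"
    by (intro sum.cong refl nn_integral_coupling_slice[OF \<gamma>]) measurable
  also have "\<dots> = (\<Sum>j\<in>UNIV. \<integral>\<^sup>+s. ennreal (K s j) * ennreal (l1dist s (e j)) \<partial>r)"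
    using markov_kernel_YD(1)[OF K_kernel] couplingsD(3)[OF \<gamma>]
    by (auto simp: coupling_slice_disintegrates[OF \<gamma> K] nn_integral_density)
  also have "\<dots> = (\<integral>\<^sup>+s. ennreal (label_dist (K s) s) \<partial>r)"
    using markov_kernel_YD[OF K_kernel] couplingsD(3)[OF \<gamma>]
    by (auto simp: nn_integral_sum[symmetric] label_dist_def sum_ennreal[symmetric] ennreal_mult
        l1dist_nonneg simp del: sum_ennreal intro!: nn_integral_cong)
  finally show ?thesis .
qed

lemma disintegrates_distr:
  fixes q :: "(real^'k::finite) measure"
  assumes \<nu>: "prob_space \<nu>" and g: "g \<in> borel_measurable \<nu>" and g_Delta: "\<And>x. g x \<in> Delta"
    and \<gamma>: "\<gamma> \<in> couplings (distr \<nu> borel g) q" and q: "q \<in> Qk" and K: "disintegrates \<gamma> K"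
  shows "transport_cost \<gamma> = ennreal (\<integral>x. label_dist (K (g x)) (g x) \<partial>\<nu>)"
    and "(\<integral>\<^sup>+x. ennreal (K (g x) j) \<partial>\<nu>) = emeasure q {e j}"
proof -
  have K_kernel: "markov_kernel_Y K"
    using K by (simp add: disintegrates_def)
  show "transport_cost \<gamma> = ennreal (\<integral>x. label_dist (K (g x)) (g x) \<partial>\<nu>)"
    using \<nu> g g_Delta markov_kernel_YD[OF K_kernel]
    by (simp add: transport_cost_disintegrates[OF \<gamma> q K] nn_integral_distr label_dist_nonneg label_dist_le_2
        finite_measure.nn_integral_eq_integral_bounded[where B=2] prob_space_def)
  show "(\<integral>\<^sup>+x. ennreal (K (g x) j) \<partial>\<nu>) = emeasure q {e j}"
    using g markov_kernel_YD(1)[OF K_kernel]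
    by (simp add: nn_integral_disintegrates[OF \<gamma> K, symmetric] nn_integral_distr)
qed

lemma W1_optimal_coupling_disintegrates:
  fixes q :: "(real^'k::finite) measure"
  assumes \<nu>: "prob_space \<nu>" and g: "g \<in> borel_measurable \<nu>" and g_Delta: "\<And>x. g x \<in> Delta"
    and q: "q \<in> Qk" and \<gamma>: "optimal_coupling (distr \<nu> borel g) q \<gamma>" and K: "disintegrates \<gamma> K"
  shows "W1 (distr \<nu> borel g) q = (\<integral>x. label_dist (K (g x)) (g x) \<partial>\<nu>)"
proof -
  have \<gamma>_coupling: "\<gamma> \<in> couplings (distr \<nu> borel g) q"
    using \<gamma> by (simp add: optimal_coupling_def)
  have "W1 (distr \<nu> borel g) q = enn2real (transport_cost \<gamma>)"
    using \<gamma> by (simp add: W1_def optimal_coupling_def)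
  also have "\<dots> = (\<integral>x. label_dist (K (g x)) (g x) \<partial>\<nu>)"
    using K markov_kernel_YD(2)[of K]
    by (simp add: disintegrates_distr(1)[OF \<nu> g g_Delta \<gamma>_coupling q K] disintegrates_def label_dist_nonneg)
  finally show ?thesis .
qed

text \<open>Any coupling of the law of f X with q, transported along the kernel it induces, gives a
  plan for the law of g X whose cost is larger by at most E |g X - f X|.\<close>
lemma W1_distr_le_add:
  fixes q :: "(real^'k::finite) measure"
  assumes \<nu>: "prob_space \<nu>"
    and f: "f \<in> borel_measurable \<nu>" and f_Delta: "\<And>x. f x \<in> Delta"
    and g: "g \<in> borel_measurable \<nu>" and g_Delta: "\<And>x. g x \<in> Delta" and q: "q \<in> Qk"
  shows "W1 (distr \<nu> borel g) q \<le> W1 (distr \<nu> borel f) q + (\<integral>x. l1dist (g x) (f x) \<partial>\<nu>)"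
proof -
  let ?E = "\<integral>x. l1dist (g x) (f x) \<partial>\<nu>"
  have "ennreal (W1 (distr \<nu> borel g) q - ?E) \<le> transport_cost \<gamma>"
    if \<gamma>: "\<gamma> \<in> couplings (distr \<nu> borel f) q" for \<gamma>
  proof -
    obtain K where K: "disintegrates \<gamma> K"
      using couplings_Qk_disintegrates[OF \<gamma> q] by blast
    then have K_kernel: "markov_kernel_Y K"
      by (simp add: disintegrates_def)
    have K_f: "\<And>j. (\<lambda>x. K (f x) j) \<in> borel_measurable \<nu>"
      using f markov_kernel_YD(1)[OF K_kernel] by measurable
    have "W1 (distr \<nu> borel g) q \<le> (\<integral>x. label_dist (K (f x)) (g x) \<partial>\<nu>)"
      by (rule W1_le_label_dist[OF \<nu> g g_Delta K_f markov_kernel_YD(2,3)[OF K_kernel] q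
            disintegrates_distr(2)[OF \<nu> f f_Delta \<gamma> q K]])
    also have "\<dots> \<le> (\<integral>x. label_dist (K (f x)) (f x) \<partial>\<nu>) + ?E"
      by (rule integral_label_dist_le_add[OF \<nu> f f_Delta g g_Delta K_f markov_kernel_YD(2,3)[OF K_kernel]])
    finally show ?thesis
      by (simp add: disintegrates_distr(1)[OF \<nu> f f_Delta \<gamma> q K] ennreal_leI)
  qed
  then have "ennreal (W1 (distr \<nu> borel g) q - ?E) \<le> ennreal (W1 (distr \<nu> borel f) q)"
    by (simp add: ennreal_W1_distr[OF \<nu> f f_Delta q] INF_greatest)
  then show ?thesis
    by (simp add: W1_def)
qed

section \<open>Classification problems\<close>

lemma sets_muX [simp]: "sets (muX \<mu> a) = sets borel"
  by (simp add: muX_def)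

lemma measurable_muX [simp]: "measurable (muX \<mu> a) M = measurable borel M"
  by (rule measurable_cong_sets) simp_all

context
  fixes \<mu> :: "('x::polish_space \<times> 'k::finite \<times> 'g::finite) measure"
  assumes cp: "classification_problem \<mu>"
begin

lemma sets_classification_problem: "sets \<mu> = sets (borel \<Otimes>\<^sub>M count_space UNIV \<Otimes>\<^sub>M count_space UNIV)"
  using cp by (simp add: classification_problem_def)

lemma measurable_classification_problem [simp]:
  "measurable \<mu> M = measurable (borel \<Otimes>\<^sub>M count_space UNIV \<Otimes>\<^sub>M count_space UNIV) M"
  by (intro measurable_cong_sets sets_classification_problem refl)

lemma space_classification_problem: "space \<mu> = UNIV"
  using cp sets_eq_imp_space_eq[of \<mu>] by (simp add: classification_problem_def space_pair_measure)

lemma finite_measure_classification_problem: "finite_measure \<mu>"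
  using cp by (simp add: classification_problem_def prob_space_def)

lemma probA_pos: "0 < probA \<mu> a"
  using cp by (simp add: classification_problem_def probA_def)

lemma integral_muX:
  assumes \<phi>: "\<phi> \<in> borel_measurable borel"
  shows "probA \<mu> a * (\<integral>x. \<phi> x \<partial>muX \<mu> a) = (\<integral>z. indicator {z. snd (snd z) = a} z * \<phi> (fst z) \<partial>\<mu>)"
proof -
  have "(\<integral>x. \<phi> x \<partial>muX \<mu> a) = (\<integral>z. (indicator {z. snd (snd z) = a} z / probA \<mu> a) * \<phi> (fst z) \<partial>\<mu>)"
    unfolding muX_def using \<phi> probA_pos[of a]
    by (simp add: integral_distr integral_density)
  also have "\<dots> = (\<integral>z. indicator {z. snd (snd z) = a} z * \<phi> (fst z) \<partial>\<mu>) / probA \<mu> a"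
    by simp
  finally show ?thesis
    using probA_pos[of a] by simp
qed

lemma prob_space_muX: "prob_space (muX \<mu> a)"
proof -
  let ?g = "\<lambda>z. indicator {z. snd (snd z) = a} z / probA \<mu> a :: real"
  have "emeasure (muX \<mu> a) UNIV = (\<integral>\<^sup>+z. ennreal (?g z) \<partial>\<mu>)"
    unfolding muX_def
    by (simp add: emeasure_distr emeasure_density space_classification_problem[symmetric])
  also have "\<dots> = ennreal (\<integral>z. ?g z \<partial>\<mu>)"
    using probA_pos[of a]
    by (intro finite_measure.nn_integral_eq_integral_bounded[OF finite_measure_classification_problem,
          where B="1 / probA \<mu> a"]) (simp_all add: indicator_def)
  also have "\<dots> = 1"
    using probA_pos[of a] by (simp add: probA_def space_classification_problem)
  finally show ?thesis
    by (intro prob_spaceI) (simp add: muX_def)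
qed

lemma emeasure_distr_density_fst:
  assumes "h \<in> borel_measurable \<mu>" "S \<in> sets borel"
  shows "emeasure (distr (density \<mu> h) borel fst) S = (\<integral>\<^sup>+z. h z * indicator (fst -` S) z \<partial>\<mu>)"
  using assms measurable_sets[of fst \<mu> borel S]
  by (simp add: emeasure_distr emeasure_density space_classification_problem)

lemma sets_label_event:
  assumes S: "S \<in> sets borel"
  shows "{z. fst z \<in> S \<and> fst (snd z) = i \<and> snd (snd z) = a} \<in> sets \<mu>"
proof -
  have X: "fst -` S \<inter> space \<mu> \<in> sets \<mu>"
    using S by (intro measurable_sets[of _ _ borel]) (simp_all add: measurable_fst)
  have YA: "(\<lambda>z. fst (snd z)) -` {i} \<inter> space \<mu> \<in> sets \<mu>" "(\<lambda>z. snd (snd z)) -` {a} \<inter> space \<mu> \<in> sets \<mu>"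
    by (intro measurable_sets[of _ _ "count_space UNIV"];
        simp add: measurable_compose[OF measurable_snd measurable_fst]
          measurable_compose[OF measurable_snd measurable_snd])+
  have "{z. fst z \<in> S \<and> fst (snd z) = i \<and> snd (snd z) = a}
    = (fst -` S \<inter> space \<mu>) \<inter> ((\<lambda>z. fst (snd z)) -` {i} \<inter> space \<mu>) \<inter> ((\<lambda>z. snd (snd z)) -` {a} \<inter> space \<mu>)"
    by (auto simp: space_classification_problem)
  then show ?thesis
    by (simp only:) (rule sets.Int[OF sets.Int[OF X YA(1)] YA(2)])
qed

text \<open>On rectangles S \<times> {i} \<times> {a} this is exactly the defining property of a Bayes regressor.\<close>
lemma distr_density_label_bayes_regressor:
  assumes bayes: "bayes_regressor \<mu> fstar"
  shows "distr (density \<mu> (\<lambda>z. ennreal (indicator {z. snd (snd z) = a \<and> fst (snd z) = i} z))) borel fst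
       = distr (density \<mu> (\<lambda>z. ennreal (indicator {z. snd (snd z) = a} z * fstar (fst z) a $ i))) borel fst"
    (is "distr (density \<mu> ?h1) borel fst = distr (density \<mu> ?h2) borel fst")
proof (rule measure_eqI)
  interpret finite_measure \<mu>
    by (rule finite_measure_classification_problem)
  have fstar: "(\<lambda>x. fstar x a) \<in> borel_measurable borel" "\<And>x. fstar x a \<in> Delta"
    using bayes by (auto simp: bayes_regressor_def)
  have h2: "(\<lambda>z. indicator {z. snd (snd z) = a} z * fstar (fst z) a $ i) \<in> borel_measurable \<mu>"
    using measurable_compose[OF measurable_fst measurable_compose[OF fstar(1) borel_measurable_nth]]
    by (intro borel_measurable_times) (simp_all, measurable)
  fix S assume "S \<in> sets (distr (density \<mu> ?h1) borel fst)"
  then have S: "S \<in> sets borel" by simp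
  have "?h1 \<in> borel_measurable \<mu>"
    unfolding measurable_classification_problem by measurable
  then have "emeasure (distr (density \<mu> ?h1) borel fst) S = (\<integral>\<^sup>+z. ?h1 z * indicator (fst -` S) z \<partial>\<mu>)"
    using S by (rule emeasure_distr_density_fst)
  also have "\<dots> = (\<integral>\<^sup>+z. indicator {z. fst z \<in> S \<and> fst (snd z) = i \<and> snd (snd z) = a} z \<partial>\<mu>)"
    by (intro nn_integral_cong) (auto simp: indicator_def)
  also have "\<dots> = emeasure \<mu> {z. fst z \<in> S \<and> fst (snd z) = i \<and> snd (snd z) = a}"
    using sets_label_event[OF S] by simp
  also have "\<dots> = ennreal (\<integral>z. indicator {z. fst z \<in> S \<and> snd (snd z) = a} z * fstar (fst z) a $ i \<partial>\<mu>)"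
    using bayes S sets_label_event[OF S] by (simp add: emeasure_eq_measure bayes_regressor_def)
  also have "\<dots> = (\<integral>\<^sup>+z. ?h2 z * indicator (fst -` S) z \<partial>\<mu>)"
  proof -
    have "(\<lambda>z. indicator {z. fst z \<in> S \<and> snd (snd z) = a} z * fstar (fst z) a $ i)
        = (\<lambda>z. indicator (fst -` S \<inter> space \<mu>) z * (indicator {z. snd (snd z) = a} z * fstar (fst z) a $ i))"
      by (auto simp: indicator_def space_classification_problem)
    moreover have "fst -` S \<inter> space \<mu> \<in> sets \<mu>"
      using S by (intro measurable_sets[of _ _ borel]) (simp_all add: measurable_fst)
    ultimately have "(\<lambda>z. indicator {z. fst z \<in> S \<and> snd (snd z) = a} z * fstar (fst z) a $ i) \<in> borel_measurable \<mu>"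
      using borel_measurable_times[OF borel_measurable_indicator h2] by simp
    then show ?thesis
      using Delta_nonneg[OF fstar(2)] Delta_le_1[OF fstar(2)]
      by (subst nn_integral_eq_integral_bounded[where B=1, symmetric])
        (auto simp: indicator_def intro!: nn_integral_cong)
  qed
  also have "\<dots> = emeasure (distr (density \<mu> ?h2) borel fst) S"
    using h2 S by (simp add: emeasure_distr_density_fst)
  finally show "emeasure (distr (density \<mu> ?h1) borel fst) S = emeasure (distr (density \<mu> ?h2) borel fst) S" .
qed simp

lemma integral_label_bayes_regressor:
  assumes bayes: "bayes_regressor \<mu> fstar" and \<phi>: "\<phi> \<in> borel_measurable borel"
  shows "(\<integral>z. indicator {z. snd (snd z) = a \<and> fst (snd z) = i} z * \<phi> (fst z) \<partial>\<mu>)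
       = (\<integral>z. indicator {z. snd (snd z) = a} z * (fstar (fst z) a $ i * \<phi> (fst z)) \<partial>\<mu>)"
proof -
  have fstar: "(\<lambda>x. fstar x a) \<in> borel_measurable borel" "\<And>x. fstar x a \<in> Delta"
    using bayes by (auto simp: bayes_regressor_def)
  let ?h1 = "\<lambda>z. indicator {z. snd (snd z) = a \<and> fst (snd z) = i} z :: real"
  let ?h2 = "\<lambda>z. indicator {z. snd (snd z) = a} z * fstar (fst z) a $ i :: real"
  have h1: "?h1 \<in> borel_measurable \<mu>"
    unfolding measurable_classification_problem by measurable
  have h2: "?h2 \<in> borel_measurable \<mu>"
    using measurable_compose[OF measurable_fst measurable_compose[OF fstar(1) borel_measurable_nth]]
    by (intro borel_measurable_times) (simp_all, measurable)
  have "(\<integral>z. ?h1 z * \<phi> (fst z) \<partial>\<mu>) = (\<integral>x. \<phi> x \<partial>distr (density \<mu> ?h1) borel fst)"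
    using h1 \<phi> by (simp add: integral_distr integral_density)
  also have "\<dots> = (\<integral>z. \<phi> (fst z) \<partial>density \<mu> ?h2)"
    using \<phi> by (simp add: distr_density_label_bayes_regressor[OF bayes] integral_distr)
  also have "\<dots> = (\<integral>z. ?h2 z * \<phi> (fst z) \<partial>\<mu>)"
    using h2 Delta_nonneg[OF fstar(2)]
    by (subst integral_density) (auto intro!: AE_I2 simp: measurable_compose[OF measurable_fst \<phi>])
  finally show ?thesis
    by (simp add: mult.assoc)
qed

lemma Err_eq_label_dist:
  assumes bayes: "bayes_regressor \<mu> fstar"
    and H: "\<And>i. (\<lambda>x. H x a i) \<in> borel_measurable borel"
    and H_nonneg: "\<And>x i. 0 \<le> H x a i" and H_sum: "\<And>x. (\<Sum>i\<in>UNIV. H x a i) = 1"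
  shows "Err \<mu> H a = (\<integral>x. label_dist (H x a) (fstar x a) \<partial>muX \<mu> a) / 2"
proof -
  interpret finite_measure \<mu>
    by (rule finite_measure_classification_problem)
  have fstar: "(\<lambda>x. fstar x a) \<in> borel_measurable borel" "\<And>x. fstar x a \<in> Delta"
    using bayes by (auto simp: bayes_regressor_def)
  have [measurable]: "(\<lambda>z. fstar (fst z) a $ i) \<in> borel_measurable (borel \<Otimes>\<^sub>M count_space UNIV \<Otimes>\<^sub>M count_space UNIV)"
    for i by (rule measurable_compose[OF measurable_fst measurable_compose[OF fstar(1) borel_measurable_nth]])
  have [measurable]: "(\<lambda>z. H (fst z) a i) \<in> borel_measurable (borel \<Otimes>\<^sub>M count_space UNIV \<Otimes>\<^sub>M count_space UNIV)"
    for i by (rule measurable_compose[OF measurable_fst H])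
  have H_le_1: "H x a i \<le> 1" for x i
    using member_le_sum[of i UNIV "H x a"] H_nonneg H_sum[of x] by simp
  let ?A = "\<lambda>z. indicator {z. snd (snd z) = a} z :: real"
  let ?AY = "\<lambda>i z. indicator {z. snd (snd z) = a \<and> fst (snd z) = i} z :: real"
  let ?\<phi> = "\<lambda>x. \<Sum>i\<in>UNIV. fstar x a $ i * (1 - H x a i)"
  have int_AY: "integrable \<mu> (\<lambda>z. ?AY i z * (1 - H (fst z) a i))" for i
    using H_nonneg H_le_1
    by (intro integrable_nonneg_bounded[where B=1]) (simp_all add: indicator_def, measurable)
  have "(\<lambda>z. ?A z * (fstar (fst z) a $ i * (1 - H (fst z) a i))) \<in> borel_measurable \<mu>" for i
    unfolding measurable_classification_problem by measurable
  then have int_A: "integrable \<mu> (\<lambda>z. ?A z * (fstar (fst z) a $ i * (1 - H (fst z) a i)))" for i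
    using H_nonneg H_le_1 Delta_le_1[OF fstar(2)] Delta_nonneg[OF fstar(2)]
    by (intro integrable_nonneg_bounded[where B=1]) (simp_all add: indicator_def mult_le_one)
  have "(\<integral>z. ?A z * (1 - H (fst z) a (fst (snd z))) \<partial>\<mu>) = (\<integral>z. (\<Sum>i\<in>UNIV. ?AY i z * (1 - H (fst z) a i)) \<partial>\<mu>)"
    by (intro Bochner_Integration.integral_cong) (auto simp: indicator_def)
  also have "\<dots> = (\<Sum>i\<in>UNIV. \<integral>z. ?AY i z * (1 - H (fst z) a i) \<partial>\<mu>)"
    by (rule Bochner_Integration.integral_sum) (rule int_AY)
  also have "\<dots> = (\<Sum>i\<in>UNIV. \<integral>z. ?A z * (fstar (fst z) a $ i * (1 - H (fst z) a i)) \<partial>\<mu>)"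
    using H by (intro sum.cong refl integral_label_bayes_regressor[OF bayes]) (auto intro: borel_measurable_diff)
  also have "\<dots> = (\<integral>z. ?A z * ?\<phi> (fst z) \<partial>\<mu>)"
    by (simp add: Bochner_Integration.integral_sum[symmetric] int_A sum_distrib_left)
  also have "\<dots> = probA \<mu> a * (\<integral>x. ?\<phi> x \<partial>muX \<mu> a)"
  proof (rule integral_muX[symmetric])
    show "?\<phi> \<in> borel_measurable borel"
      by (intro borel_measurable_sum borel_measurable_times borel_measurable_diff borel_measurable_const
          measurable_compose[OF fstar(1) borel_measurable_nth] H)
  qed
  also have "\<dots> = probA \<mu> a * ((\<integral>x. label_dist (H x a) (fstar x a) \<partial>muX \<mu> a) / 2)"
    using fstar(2) H_sum by (simp add: label_dist_Delta)
  finally show ?thesis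
    using probA_pos[of a] by (simp add: Err_def)
qed

lemma W1_pushf_le_add:
  assumes bayes: "bayes_regressor \<mu> fstar"
    and ftil: "(\<lambda>x. ftil x a) \<in> borel_measurable borel" "\<And>x. ftil x a \<in> Delta" and q: "q \<in> Qk"
  shows "W1 (pushf \<mu> ftil a) q \<le> W1 (pushf \<mu> fstar a) q + (\<integral>x. l1dist (ftil x a) (fstar x a) \<partial>muX \<mu> a)"
  unfolding pushf_def using bayes ftil
  by (intro W1_distr_le_add[OF prob_space_muX _ _ _ _ q]) (simp_all add: bayes_regressor_def)

lemma post_processing_bounds:
  assumes bayes: "bayes_regressor \<mu> fstar"
    and ftil: "(\<lambda>x. ftil x a) \<in> borel_measurable borel" "\<And>x. ftil x a \<in> Delta"
    and qt: "qt \<in> Qk" and \<gamma>: "optimal_coupling (pushf \<mu> ftil a) qt \<gamma>" and K: "disintegrates \<gamma> (K a)"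
  shows "W1 (pushf \<mu> fstar a) qt \<le> 2 * Err \<mu> (\<lambda>x a j. K a (ftil x a) j) a"
    and "2 * Err \<mu> (\<lambda>x a j. K a (ftil x a) j) a
      \<le> W1 (pushf \<mu> ftil a) qt + (\<integral>x. l1dist (ftil x a) (fstar x a) \<partial>muX \<mu> a)"
proof -
  note \<nu> = prob_space_muX[of a]
  have fstar: "(\<lambda>x. fstar x a) \<in> borel_measurable borel" "\<And>x. fstar x a \<in> Delta"
    using bayes by (simp_all add: bayes_regressor_def)
  have K_kernel: "markov_kernel_Y (K a)"
    using K by (simp add: disintegrates_def)
  have K_ftil: "(\<lambda>x. K a (ftil x a) j) \<in> borel_measurable borel" for j
    using measurable_compose[OF ftil(1) markov_kernel_YD(1)[OF K_kernel]] .
  have \<gamma>_coupling: "\<gamma> \<in> couplings (distr (muX \<mu> a) borel (\<lambda>x. ftil x a)) qt"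
    using \<gamma> by (simp add: optimal_coupling_def pushf_def)
  have Err: "2 * Err \<mu> (\<lambda>x a j. K a (ftil x a) j) a = (\<integral>x. label_dist (K a (ftil x a)) (fstar x a) \<partial>muX \<mu> a)"
    using K_ftil markov_kernel_YD[OF K_kernel] by (simp add: Err_eq_label_dist[OF bayes])
  show "W1 (pushf \<mu> fstar a) qt \<le> 2 * Err \<mu> (\<lambda>x a j. K a (ftil x a) j) a"
    unfolding pushf_def Err using ftil
    by (intro W1_le_label_dist[OF \<nu>] markov_kernel_YD[OF K_kernel] qt
        disintegrates_distr(2)[OF \<nu> _ _ \<gamma>_coupling qt K]) (simp_all add: fstar K_ftil)
  have "(\<integral>x. label_dist (K a (ftil x a)) (fstar x a) \<partial>muX \<mu> a)
    \<le> (\<integral>x. label_dist (K a (ftil x a)) (ftil x a) \<partial>muX \<mu> a) + (\<integral>x. l1dist (ftil x a) (fstar x a) \<partial>muX \<mu> a)"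
    unfolding l1dist_commute[of "ftil _ a"] using ftil
    by (intro integral_label_dist_le_add[OF \<nu>] markov_kernel_YD[OF K_kernel]) (simp_all add: fstar K_ftil)
  also have "(\<integral>x. label_dist (K a (ftil x a)) (ftil x a) \<partial>muX \<mu> a) = W1 (pushf \<mu> ftil a) qt"
    unfolding pushf_def using ftil \<gamma>
    by (intro W1_optimal_coupling_disintegrates[OF \<nu> _ _ qt _ K, symmetric]) (simp_all add: pushf_def)
  finally show "2 * Err \<mu> (\<lambda>x a j. K a (ftil x a) j) a
      \<le> W1 (pushf \<mu> ftil a) qt + (\<integral>x. l1dist (ftil x a) (fstar x a) \<partial>muX \<mu> a)"
    unfolding Err .
qed

end

theorem theorem3p4:
  fixes \<mu> :: "('x::polish_space \<times> 'k::finite \<times> 'g::finite) measure"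
    and fstar ftil :: "'x \<Rightarrow> 'g \<Rightarrow> real^'k"
    and qt :: "(real^'k) measure"
    and \<gamma> :: "'g \<Rightarrow> ((real^'k) \<times> (real^'k)) measure"
    and K :: "'g \<Rightarrow> real^'k \<Rightarrow> 'k \<Rightarrow> real"
  assumes k2: "CARD('k) \<ge> 2"
    and cp: "classification_problem \<mu>"
    and bayes: "bayes_regressor \<mu> fstar"
    and ftil_meas: "\<forall>a. (\<lambda>x. ftil x a) \<in> borel_measurable borel"
    and ftil_Delta: "\<forall>x a. ftil x a \<in> Delta"
    and qt_Q: "qt \<in> Qk"
    and qt_min: "\<forall>q\<in>Qk. (\<Sum>a\<in>UNIV. W1 (pushf \<mu> ftil a) qt) \<le> (\<Sum>a\<in>UNIV. W1 (pushf \<mu> ftil a) q)"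
    and \<gamma>_opt: "\<forall>a. optimal_coupling (pushf \<mu> ftil a) qt (\<gamma> a)"
    and K_dis: "\<forall>a. disintegrates (\<gamma> a) (K a)"
  shows "0 \<le> (\<Sum>a\<in>UNIV. Err \<mu> (\<lambda>x a j. K a (ftil x a) j) a)
              - (1/2) * (INF q\<in>Qk. (\<Sum>a\<in>UNIV. W1 (pushf \<mu> fstar a) q))
       \<and> (\<Sum>a\<in>UNIV. Err \<mu> (\<lambda>x a j. K a (ftil x a) j) a)
              - (1/2) * (INF q\<in>Qk. (\<Sum>a\<in>UNIV. W1 (pushf \<mu> fstar a) q))
         \<le> (\<Sum>a\<in>UNIV. \<integral>x. l1dist (ftil x a) (fstar x a) \<partial>(muX \<mu> a))"
proof -
  let ?Err = "\<lambda>a. Err \<mu> (\<lambda>x a j. K a (ftil x a) j) a"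
  let ?E = "\<lambda>a. \<integral>x. l1dist (ftil x a) (fstar x a) \<partial>muX \<mu> a"
  let ?W = "\<lambda>q. \<Sum>a\<in>UNIV. W1 (pushf \<mu> fstar a) q"
  note bounds = post_processing_bounds[OF cp bayes ftil_meas[rule_format] ftil_Delta[rule_format] qt_Q
      \<gamma>_opt[rule_format] K_dis[rule_format]]
  have W_bdd: "bdd_below (?W ` Qk)"
    by (intro bdd_belowI[of _ 0]) (auto simp: W1_def sum_nonneg)
  have "(INF q\<in>Qk. ?W q) \<le> ?W qt"
    by (rule cINF_lower[OF W_bdd qt_Q])
  also have "\<dots> \<le> 2 * (\<Sum>a\<in>UNIV. ?Err a)"
    unfolding sum_distrib_left by (intro sum_mono bounds(1))
  finally have "(INF q\<in>Qk. ?W q) \<le> 2 * (\<Sum>a\<in>UNIV. ?Err a)" .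
  moreover have "2 * (\<Sum>a\<in>UNIV. ?Err a) - 2 * (\<Sum>a\<in>UNIV. ?E a) \<le> (INF q\<in>Qk. ?W q)"
  proof (rule cINF_greatest)
    fix q :: "(real^'k) measure" assume q: "q \<in> Qk"
    have "2 * (\<Sum>a\<in>UNIV. ?Err a) \<le> (\<Sum>a\<in>UNIV. W1 (pushf \<mu> ftil a) qt) + (\<Sum>a\<in>UNIV. ?E a)"
      unfolding sum_distrib_left sum.distrib[symmetric] by (intro sum_mono bounds(2))
    also have "\<dots> \<le> (\<Sum>a\<in>UNIV. W1 (pushf \<mu> ftil a) q) + (\<Sum>a\<in>UNIV. ?E a)"
      using qt_min q by simp
    also have "\<dots> \<le> (\<Sum>a\<in>UNIV. W1 (pushf \<mu> fstar a) q + ?E a) + (\<Sum>a\<in>UNIV. ?E a)"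
      using ftil_meas ftil_Delta by (intro add_right_mono sum_mono W1_pushf_le_add[OF cp bayes _ _ q]) simp_all
    also have "\<dots> = ?W q + 2 * (\<Sum>a\<in>UNIV. ?E a)"
      by (simp add: sum.distrib)
    finally show "2 * (\<Sum>a\<in>UNIV. ?Err a) - 2 * (\<Sum>a\<in>UNIV. ?E a) \<le> ?W q"
      by simp
  qed (use qt_Q in blast)
  ultimately show ?thesis
    by linarith
qed

end
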